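(* Let $n\ge2$, let $m\ge 3$ be odd, and let $\mathcal{A}$ be an $m$th order $n$-dimensional complete Hankel tensor which has at least one H-eigenvalue. Then all H-eigenvalues of $\mathcal{A}$ are nonnegative. Moreover, if $\lambda$ is an H-eigenvalue of $\mathcal{A}$ with H-eigenvector $x=(x_1,\dots,x_n)^\top$, then either $\lambda=0$, or $\lambda>0$ and $x_1\neq 0$.
   Context: A complete Hankel tensor is a tensor of the form $\mathcal{A}=\sum_{k=1}^r\alpha_k(u_k)^m$ with $\alpha_k>0$, $u_k=(1,u_k,u_k^2,\dots,u_k^{n-1})^\top$ for pairwise distinct reals $u_1,\dots,u_r$, where $w^m$ denotes the tensor with entries $w_{i_1}\cdots w_{i_m}$. For a symmetric tensor $\mathcal{A}=(a_{i_1\cdots i_m})$ and $x\in\mathbb{C}^n$, $\mathcal{A}x^{m-1}$ is the vector with $i$th component $\sum_{i_2,\dots,i_m=1}^n a_{ii_2\cdots i_m}x_{i_2}\cdots x_{i_m}$, and $x^{[m-1]}$ is the vector with $i$th component $x_i^{m-1}$. A real number $\lambda$ is an H-eigenvalue of $\mathcal{A}$ with H-eigenvector $x$ if $x\in\mathbb{R}^n\setminus\{0\}$ and $\mathcal{A}x^{m-1}=\lambda x^{[m-1]}$. *)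

theory Defs
  imports Complex_Main
begin

text \<open>Conventions: indices are 0-based, so the paper's index i (1..n) is our i-1.
  A tensor of order m and dimension n is a function on index lists of length m
  with entries in {..<n}; a vector in R^n is a function nat => real (only the
  values below n matter).\<close>

type_synonym tensor = "nat list \<Rightarrow> real"

definition index_lists :: "nat \<Rightarrow> nat \<Rightarrow> nat list set" where
  "index_lists n k = {is. length is = k \<and> set is \<subseteq> {..<n}}"

text \<open>A = sum_k alpha_k (u_k)^m with u_k = (1, u_k, ..., u_k^(n-1)).\<close>
definition complete_Hankel :: "nat \<Rightarrow> nat \<Rightarrow> tensor \<Rightarrow> bool" where
  "complete_Hankel n m A \<longleftrightarrow>
     (\<exists>r::nat. \<exists>\<alpha> u :: nat \<Rightarrow> real. r \<ge> 1 \<and> (\<forall>k<r. \<alpha> k > 0) \<and> inj_on u {..<r} \<and>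
        (\<forall>is \<in> index_lists n m.
           A is = (\<Sum>k<r. \<alpha> k * prod_list (map (\<lambda>i. u k ^ i) is))))"

definition tensor_apply :: "nat \<Rightarrow> nat \<Rightarrow> tensor \<Rightarrow> (nat \<Rightarrow> real) \<Rightarrow> nat \<Rightarrow> real" where
  "tensor_apply n m A x i = (\<Sum>is \<in> index_lists n (m - 1). A (i # is) * prod_list (map x is))"

definition H_eigenpair :: "nat \<Rightarrow> nat \<Rightarrow> tensor \<Rightarrow> real \<Rightarrow> (nat \<Rightarrow> real) \<Rightarrow> bool" where
  "H_eigenpair n m A lam x \<longleftrightarrow>
     (\<exists>i<n. x i \<noteq> 0) \<and> (\<forall>i<n. tensor_apply n m A x i = lam * x i ^ (m - 1))"

definition H_eigenvalue :: "nat \<Rightarrow> nat \<Rightarrow> tensor \<Rightarrow> real \<Rightarrow> bool" where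
  "H_eigenvalue n m A lam \<longleftrightarrow> (\<exists>x. H_eigenpair n m A lam x)"

end

theory Submission
  imports Defs
begin

text \<open>Writing \<open>A = \<Sum>\<^sub>k \<alpha>\<^sub>k u\<^sub>k\<^sup>m\<close>, the \<open>i\<close>-th component of \<open>A x\<^sup>m\<^sup>-\<^sup>1\<close> is
  \<open>\<Sum>\<^sub>k \<alpha>\<^sub>k u\<^sub>k\<^sup>i \<langle>u\<^sub>k, x\<rangle>\<^sup>m\<^sup>-\<^sup>1\<close>. For odd \<open>m\<close> the exponent \<open>m - 1\<close> is even, so the first
  component (where \<open>u\<^sub>k\<^sup>0 = 1\<close>) is a sum of nonnegative terms. If \<open>x\<^sub>1 \<noteq> 0\<close>, the
  first eigen-equation \<open>\<lambda> x\<^sub>1\<^sup>m\<^sup>-\<^sup>1 = (A x\<^sup>m\<^sup>-\<^sup>1)\<^sub>1 \<ge> 0\<close> gives \<open>\<lambda> \<ge> 0\<close>. If \<open>x\<^sub>1 = 0\<close>, that sum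
  vanishes, so every \<open>\<langle>u\<^sub>k, x\<rangle>\<close> is zero, hence \<open>A x\<^sup>m\<^sup>-\<^sup>1 = 0\<close> and \<open>\<lambda> = 0\<close> because \<open>x \<noteq> 0\<close>.\<close>

definition Vandermonde_sum :: "nat \<Rightarrow> (nat \<Rightarrow> real) \<Rightarrow> (nat \<Rightarrow> real) \<Rightarrow> tensor" where
  "Vandermonde_sum r \<alpha> u is = (\<Sum>k<r. \<alpha> k * prod_list (map (\<lambda>i. u k ^ i) is))"

lemma index_lists_Suc:
  "index_lists n (Suc k) = (\<lambda>(j, is). j # is) ` ({..<n} \<times> index_lists n k)"
  unfolding index_lists_def by (auto simp: image_iff length_Suc_conv)

lemma sum_index_lists_prod_list:
  fixes f :: "nat \<Rightarrow> 'a :: comm_semiring_1"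
  shows "(\<Sum>is \<in> index_lists n k. prod_list (map f is)) = (\<Sum>j<n. f j) ^ k"
proof (induction k)
  case 0
  have "index_lists n 0 = {[]}" unfolding index_lists_def by auto
  then show ?case by simp
next
  case (Suc k)
  have inj: "inj_on (\<lambda>(j, is). j # is) ({..<n} \<times> index_lists n k)"
    by (auto simp: inj_on_def)
  have "(\<Sum>is \<in> index_lists n (Suc k). prod_list (map f is))
      = (\<Sum>(j, is) \<in> {..<n} \<times> index_lists n k. f j * prod_list (map f is))"
    unfolding index_lists_Suc sum.reindex[OF inj] by (simp add: case_prod_beta)
  also have "\<dots> = (\<Sum>j<n. f j) * (\<Sum>is \<in> index_lists n k. prod_list (map f is))"
    by (simp add: sum.cartesian_product[symmetric] sum_product)
  finally show ?case using Suc.IH by simp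
qed

lemma prod_list_map_times:
  fixes f g :: "'a \<Rightarrow> 'b :: comm_monoid_mult"
  shows "prod_list (map (\<lambda>j. f j * g j) xs) = prod_list (map f xs) * prod_list (map g xs)"
  by (induction xs) (simp_all add: mult_ac)

lemma tensor_apply_cong:
  assumes "m \<ge> 1" "i < n" "\<forall>is \<in> index_lists n m. A is = B is"
  shows "tensor_apply n m A x i = tensor_apply n m B x i"
proof -
  have "i # is \<in> index_lists n m" if "is \<in> index_lists n (m - 1)" for "is"
    using that assms(1,2) unfolding index_lists_def by auto
  then show ?thesis
    unfolding tensor_apply_def using assms(3) by (intro sum.cong) auto
qed

lemma H_eigenpair_cong:
  assumes "m \<ge> 1" "\<forall>is \<in> index_lists n m. A is = B is"
  shows "H_eigenpair n m A lam x \<longleftrightarrow> H_eigenpair n m B lam x"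
  unfolding H_eigenpair_def using tensor_apply_cong[OF assms(1) _ assms(2)] by auto

lemma tensor_apply_Vandermonde_sum:
  "tensor_apply n m (Vandermonde_sum r \<alpha> u) x i
     = (\<Sum>k<r. \<alpha> k * u k ^ i * (\<Sum>j<n. u k ^ j * x j) ^ (m - 1))"
proof -
  have "tensor_apply n m (Vandermonde_sum r \<alpha> u) x i
      = (\<Sum>is \<in> index_lists n (m - 1). \<Sum>k<r.
            \<alpha> k * u k ^ i * prod_list (map (\<lambda>j. u k ^ j * x j) is))"
    unfolding tensor_apply_def Vandermonde_sum_def
    by (simp add: sum_distrib_right prod_list_map_times mult.assoc)
  also have "\<dots> = (\<Sum>k<r. \<alpha> k * u k ^ i *
            (\<Sum>is \<in> index_lists n (m - 1). prod_list (map (\<lambda>j. u k ^ j * x j) is)))"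
    by (subst sum.swap) (simp add: sum_distrib_left)
  finally show ?thesis by (simp add: sum_index_lists_prod_list)
qed

context
  fixes n m r :: nat and \<alpha> u :: "nat \<Rightarrow> real"
  assumes nonneg: "\<forall>k\<in>{..<r}. \<alpha> k \<ge> 0" and even_exp: "even (m - 1)"
begin

lemma Vandermonde_sum_terms_nonneg:
  "k \<in> {..<r} \<Longrightarrow> 0 \<le> \<alpha> k * (\<Sum>j<n. u k ^ j * x j) ^ (m - 1)"
  using nonneg even_exp by (simp add: zero_le_even_power)

lemma tensor_apply_Vandermonde_sum_0_nonneg:
  "tensor_apply n m (Vandermonde_sum r \<alpha> u) x 0 \<ge> 0"
  unfolding tensor_apply_Vandermonde_sum
proof (rule sum_nonneg)
  fix k assume "k \<in> {..<r}"
  then show "0 \<le> \<alpha> k * u k ^ 0 * (\<Sum>j<n. u k ^ j * x j) ^ (m - 1)"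
    using Vandermonde_sum_terms_nonneg[of k x] by simp
qed

lemma tensor_apply_Vandermonde_sum_eq_0:
  assumes "tensor_apply n m (Vandermonde_sum r \<alpha> u) x 0 = 0"
  shows "tensor_apply n m (Vandermonde_sum r \<alpha> u) x i = 0"
  unfolding tensor_apply_Vandermonde_sum
proof (rule sum.neutral, rule ballI)
  fix k assume "k \<in> {..<r}"
  moreover have "(\<Sum>k<r. \<alpha> k * (\<Sum>j<n. u k ^ j * x j) ^ (m - 1)) = 0"
    using assms by (simp add: tensor_apply_Vandermonde_sum)
  ultimately have "\<alpha> k * (\<Sum>j<n. u k ^ j * x j) ^ (m - 1) = 0"
    using sum_nonneg_eq_0_iff[of "{..<r}" "\<lambda>k. \<alpha> k * (\<Sum>j<n. u k ^ j * x j) ^ (m - 1)"]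
      Vandermonde_sum_terms_nonneg by blast
  then show "\<alpha> k * u k ^ i * (\<Sum>j<n. u k ^ j * x j) ^ (m - 1) = 0"
    by (metis mult.assoc mult.commute mult_zero_left)
qed

lemma H_eigenpair_Vandermonde_sum:
  assumes "m \<ge> 2" and eig: "H_eigenpair n m (Vandermonde_sum r \<alpha> u) lam x"
  shows "lam = 0 \<or> (lam > 0 \<and> x 0 \<noteq> 0)"
proof -
  let ?T = "Vandermonde_sum r \<alpha> u"
  obtain i where i: "i < n" "x i \<noteq> 0"
    and eq: "\<And>i. i < n \<Longrightarrow> tensor_apply n m ?T x i = lam * x i ^ (m - 1)"
    using eig unfolding H_eigenpair_def by blast
  have first: "tensor_apply n m ?T x 0 = lam * x 0 ^ (m - 1)"
    using eq i(1) by simp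
  show ?thesis
  proof (cases "x 0 = 0")
    case True
    then have "tensor_apply n m ?T x 0 = 0"
      using first \<open>m \<ge> 2\<close> by simp
    then have "lam * x i ^ (m - 1) = 0"
      using tensor_apply_Vandermonde_sum_eq_0 eq i(1) by metis
    then show ?thesis using i(2) by simp
  next
    case False
    then have "x 0 ^ (m - 1) > 0"
      using even_exp by (simp add: zero_less_power_eq)
    moreover have "lam * x 0 ^ (m - 1) \<ge> 0"
      using first tensor_apply_Vandermonde_sum_0_nonneg by metis
    ultimately have "lam \<ge> 0" by (simp add: zero_le_mult_iff)
    then show ?thesis using False by auto
  qed
qed

end

theorem proposition4:
  fixes n m :: nat and A :: tensor
  assumes "n \<ge> 2" and "m \<ge> 3" and "odd m"
    and "complete_Hankel n m A"
    and "\<exists>lam. H_eigenvalue n m A lam"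
  shows "(\<forall>lam. H_eigenvalue n m A lam \<longrightarrow> lam \<ge> 0) \<and>
         (\<forall>lam x. H_eigenpair n m A lam x \<longrightarrow> lam = 0 \<or> (lam > 0 \<and> x 0 \<noteq> 0))"
proof -
  obtain r \<alpha> u where pos: "\<forall>k<r. \<alpha> k > 0"
    and A: "\<forall>is \<in> index_lists n m. A is = Vandermonde_sum r \<alpha> u is"
    using assms(4) unfolding complete_Hankel_def Vandermonde_sum_def by blast
  have "lam = 0 \<or> (lam > 0 \<and> x 0 \<noteq> 0)" if "H_eigenpair n m A lam x" for lam x
  proof (rule H_eigenpair_Vandermonde_sum)
    show "\<forall>k\<in>{..<r}. \<alpha> k \<ge> 0" using pos by (simp add: less_imp_le)
    show "even (m - 1)" "m \<ge> 2" using assms(2,3) by auto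
    show "H_eigenpair n m (Vandermonde_sum r \<alpha> u) lam x"
      using that H_eigenpair_cong[OF _ A] assms(2) by simp
  qed
  then show ?thesis unfolding H_eigenvalue_def by force
qed

end
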